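(* Let $n\ge 4$, $N=\{1,\dots,n\}$, fix distinct $i_1,i_2\in N$ and let $\hat N^c=N\setminus\{i_1,i_2\}$. Then the inequality $$\sum_{j\in\hat N^c}\left(x_{i_1j}+x_{ji_1}+x_{ji_2}\right)-x_{i_1i_2}-\sum_{j,j'\in\hat N^c:\,j\ne j'} x_{jj'}\le 3-\frac{(n-4)(n-5)}{2}$$ is a valid inequality for the weak order polytope $P^n_{WO}$, i.e. it holds for every point $x\in P^n_{WO}$.
   Context: Let $N=\{1,\dots,n\}$ and $A_N=\{(i,j): i,j\in N, i\ne j\}$. A weak order on $N$ is a binary relation $W\subseteq N\times N$ that is reflexive, transitive and total; $(i,j)\in W$ is read "$i$ is preferred over or tied with $j$". The characteristic vector of $W$ is $x^W\in\{0,1\}^{A_N}$ with $x^W_{(i,j)}=1$ if $(i,j)\in W$ and $0$ otherwise. The weak order polytope $P^n_{WO}$ is the convex hull of the characteristic vectors of all weak orders on $N$; its points are vectors $x\in\mathbb{R}^{A_N}$ and $x_{ij}$ denotes the coordinate $x_{(i,j)}$. *)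

theory Defs
  imports "HOL-Analysis.Analysis"
begin

definition arcs :: "nat \<Rightarrow> (nat \<times> nat) set" where
  "arcs n = {(i, j). i \<in> {1..n} \<and> j \<in> {1..n} \<and> i \<noteq> j}"

definition weak_order_on :: "nat \<Rightarrow> (nat \<times> nat) set \<Rightarrow> bool" where
  "weak_order_on n W \<longleftrightarrow> W \<subseteq> {1..n} \<times> {1..n} \<and> refl_on {1..n} W \<and> trans W
     \<and> (\<forall>i\<in>{1..n}. \<forall>j\<in>{1..n}. (i, j) \<in> W \<or> (j, i) \<in> W)"

text \<open>Characteristic vector in R^{A_N}; points of R^{A_N} are represented as
  real functions on pairs that vanish outside A_N.\<close>
definition char_vec :: "nat \<Rightarrow> (nat \<times> nat) set \<Rightarrow> (nat \<times> nat \<Rightarrow> real)" where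
  "char_vec n W = (\<lambda>a. if a \<in> arcs n \<and> a \<in> W then 1 else 0)"

definition weak_order_polytope :: "nat \<Rightarrow> (nat \<times> nat \<Rightarrow> real) set" where
  "weak_order_polytope n =
     {x. \<exists>S c. finite S \<and> S \<noteq> {} \<and> (\<forall>W\<in>S. weak_order_on n W) \<and> (\<forall>W\<in>S. c W \<ge> 0)
          \<and> sum c S = 1 \<and> x = (\<lambda>a. \<Sum>W\<in>S. c W * char_vec n W a)}"

end

theory Submission
  imports Defs
begin

text \<open>The left-hand side is linear in \<open>x\<close>, so it suffices to check the inequality at the
  characteristic vector of a weak order \<open>W\<close>. Let \<open>C = N - {i1, i2}\<close>, \<open>m = |C|\<close>, and let \<open>K\<close> be
  the set of \<open>j \<in> C\<close> tied with \<open>i1\<close> and weakly preferred to \<open>i2\<close>, \<open>k = |K|\<close>. Each \<open>j \<in> C\<close>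
  contributes at most 2 to the first sum, plus 1 if \<open>j \<in> K\<close>. By totality every pair \<open>j \<noteq> j'\<close>
  in \<open>C\<close> has \<open>x (j, j') + x (j', j) \<ge> 1\<close>, and by transitivity through \<open>i1\<close> pairs inside \<open>K\<close> count
  twice, so the last sum is at least \<open>(m(m-1) + k(k-1))/2\<close>. If \<open>K \<noteq> {}\<close> then \<open>x (i1, i2) = 1\<close>,
  and the total excess over \<open>2m - m(m-1)/2\<close> is \<open>k - 1 - k(k-1)/2 = -(k-1)(k-2)/2 \<le> 0\<close>,
  as \<open>k\<close> is an integer.\<close>

definition offdiag :: "'a set \<Rightarrow> ('a \<times> 'a) set" where
  "offdiag A = A \<times> A - Id"

lemma finite_offdiag: "finite A \<Longrightarrow> finite (offdiag A)"
  by (simp add: offdiag_def)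

lemma offdiag_mono: "A \<subseteq> B \<Longrightarrow> offdiag A \<subseteq> offdiag B"
  by (auto simp: offdiag_def)

lemma card_offdiag:
  assumes "finite A"
  shows "real (card (offdiag A)) = real (card A) * (real (card A) - 1)"
proof -
  have "offdiag A = A \<times> A - (\<lambda>a. (a, a)) ` A"
    by (auto simp: offdiag_def)
  moreover have "card ((\<lambda>a. (a, a)) ` A) = card A"
    by (rule card_image) (auto simp: inj_on_def)
  ultimately have "card (offdiag A) = card A * card A - card A"
    using assms by (simp add: card_Diff_subset card_cartesian_product image_subset_iff)
  moreover have "card A \<le> card A * card A"
    by (cases "card A") auto
  ultimately show ?thesis
    by (simp add: of_nat_diff algebra_simps)
qed

lemma sum_offdiag_swap: "(\<Sum>p\<in>offdiag A. f (snd p, fst p)) = sum f (offdiag A)"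
proof -
  have "prod.swap ` offdiag A = offdiag A"
    by (auto simp: offdiag_def)
  then show ?thesis
    using sum.reindex[of prod.swap "offdiag A" f] by (simp add: comp_def prod.swap_def)
qed

lemma weak_order_on_total:
  "weak_order_on n W \<Longrightarrow> i \<in> {1..n} \<Longrightarrow> j \<in> {1..n} \<Longrightarrow> (i, j) \<in> W \<or> (j, i) \<in> W"
  by (simp add: weak_order_on_def)

lemma weak_order_on_trans: "weak_order_on n W \<Longrightarrow> trans W"
  by (simp add: weak_order_on_def)

lemma char_vec_arc:
  "i \<in> {1..n} \<Longrightarrow> j \<in> {1..n} \<Longrightarrow> i \<noteq> j \<Longrightarrow> char_vec n W (i, j) = (if (i, j) \<in> W then 1 else 0)"
  by (simp add: char_vec_def arcs_def)

lemma char_vec_nonneg: "char_vec n W a \<ge> 0"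
  by (simp add: char_vec_def)

lemma sum_char_vec_star_le:
  assumes "i1 \<in> {1..n}" "i2 \<in> {1..n}" "C \<subseteq> {1..n} - {i1, i2}"
  shows "(\<Sum>j\<in>C. char_vec n W (i1, j) + char_vec n W (j, i1) + char_vec n W (j, i2))
    \<le> 2 * real (card C) + real (card {j \<in> C. (i1, j) \<in> W \<and> (j, i1) \<in> W \<and> (j, i2) \<in> W})"
    (is "_ \<le> _ + real (card ?K)")
proof -
  have "finite C"
    using assms(3) finite_subset by blast
  have "(\<Sum>j\<in>C. char_vec n W (i1, j) + char_vec n W (j, i1) + char_vec n W (j, i2))
      \<le> (\<Sum>j\<in>C. 2 + (if j \<in> ?K then 1 else 0))"
  proof (rule sum_mono)
    fix j
    assume "j \<in> C"
    then have "j \<in> {1..n}" "j \<noteq> i1" "j \<noteq> i2"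
      using assms(3) by auto
    with \<open>j \<in> C\<close> show "char_vec n W (i1, j) + char_vec n W (j, i1) + char_vec n W (j, i2)
        \<le> 2 + (if j \<in> ?K then 1 else 0)"
      using assms(1,2) by (auto simp: char_vec_arc)
  qed
  also have "\<dots> = 2 * real (card C) + real (card ?K)"
    using \<open>finite C\<close> by (simp add: sum.distrib sum.inter_filter[symmetric])
  finally show ?thesis .
qed

lemma sum_char_vec_offdiag_ge:
  assumes W: "weak_order_on n W" and C: "C \<subseteq> {1..n}" and "K \<subseteq> C"
    and tied: "\<forall>a\<in>K. \<forall>b\<in>K. (a, b) \<in> W"
  shows "real (card (offdiag C)) + real (card (offdiag K)) \<le> 2 * sum (char_vec n W) (offdiag C)"
proof -
  have "finite C"
    using C finite_subset by blast
  have pair: "1 + (if p \<in> offdiag K then 1 else 0) \<le> char_vec n W p + char_vec n W (snd p, fst p)"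
    if "p \<in> offdiag C" for p
  proof -
    obtain a b where p: "p = (a, b)"
      by (cases p)
    with that C have ab: "a \<in> {1..n}" "b \<in> {1..n}" "a \<noteq> b"
      by (auto simp: offdiag_def)
    with p show ?thesis
      using weak_order_on_total[OF W ab(1,2)] tied
      by (auto simp: char_vec_arc offdiag_def)
  qed
  have "real (card (offdiag C)) + real (card (offdiag K))
      = (\<Sum>p\<in>offdiag C. 1 + (if p \<in> offdiag K then 1 else 0))"
    using \<open>finite C\<close> offdiag_mono[OF \<open>K \<subseteq> C\<close>]
    by (simp add: sum.distrib sum.If_cases Int_absorb1 finite_offdiag)
  also have "\<dots> \<le> (\<Sum>p\<in>offdiag C. char_vec n W p + char_vec n W (snd p, fst p))"
    using pair by (rule sum_mono)
  also have "\<dots> = 2 * sum (char_vec n W) (offdiag C)"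
    by (simp add: sum.distrib sum_offdiag_swap)
  finally show ?thesis .
qed

lemma of_nat_minus_one_mult_minus_two_nonneg: "(real k - 1) * (real k - 2) \<ge> 0"
proof (cases "k \<ge> 2")
  case True
  then show ?thesis
    by (simp add: mult_nonneg_nonneg)
next
  case False
  then have "k = 0 \<or> k = 1"
    by auto
  then show ?thesis
    by auto
qed

definition ineq_lhs :: "nat \<Rightarrow> nat \<Rightarrow> nat \<Rightarrow> (nat \<times> nat \<Rightarrow> real) \<Rightarrow> real" where
  "ineq_lhs n i1 i2 x =
     (\<Sum>j\<in>{1..n} - {i1, i2}. x (i1, j) + x (j, i1) + x (j, i2)) - x (i1, i2)
     - sum x (offdiag ({1..n} - {i1, i2}))"

lemma ineq_lhs_weighted_sum:
  "ineq_lhs n i1 i2 (\<lambda>a. \<Sum>W\<in>S. c W * v W a) = (\<Sum>W\<in>S. c W * ineq_lhs n i1 i2 (v W))"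
proof -
  have swap: "(\<Sum>a\<in>A. \<Sum>W\<in>S. c W * f W a) = (\<Sum>W\<in>S. c W * (\<Sum>a\<in>A. f W a))"
    for A :: "'b set" and f
    by (simp add: sum_distrib_left sum.swap[of _ A])
  show ?thesis
    unfolding ineq_lhs_def
    using swap[of "\<lambda>W j. v W (i1, j) + v W (j, i1) + v W (j, i2)" "{1..n} - {i1, i2}"]
      swap[of v "offdiag ({1..n} - {i1, i2})"]
    by (simp add: sum.distrib distrib_left right_diff_distrib sum_subtractf)
qed

lemma ineq_lhs_char_vec_le:
  assumes W: "weak_order_on n W" and "n \<ge> 4"
    and i: "i1 \<in> {1..n}" "i2 \<in> {1..n}" "i1 \<noteq> i2"
  shows "ineq_lhs n i1 i2 (char_vec n W) \<le> 3 - (real n - 4) * (real n - 5) / 2"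
proof -
  define C where "C = {1..n} - {i1, i2}"
  define K where "K = {j \<in> C. (i1, j) \<in> W \<and> (j, i1) \<in> W \<and> (j, i2) \<in> W}"
  define m where "m = real (card C)"
  define k where "k = real (card K)"
  define x12 where "x12 = char_vec n W (i1, i2)"
  have "C \<subseteq> {1..n}" "finite C" "K \<subseteq> C"
    by (auto simp: C_def K_def)
  have m: "m = real n - 2"
    using i \<open>n \<ge> 4\<close> by (simp add: m_def C_def card_Diff_subset of_nat_diff)
  have "trans W"
    using W by (rule weak_order_on_trans)
  have star: "(\<Sum>j\<in>C. char_vec n W (i1, j) + char_vec n W (j, i1) + char_vec n W (j, i2)) \<le> 2 * m + k"
    using sum_char_vec_star_le[OF i(1,2), of C W] by (simp add: C_def K_def m_def k_def)
  have "\<forall>a\<in>K. \<forall>b\<in>K. (a, b) \<in> W"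
    using \<open>trans W\<close> by (auto simp: K_def dest: transD)
  then have pairs: "m * (m - 1) + k * (k - 1) \<le> 2 * sum (char_vec n W) (offdiag C)"
    using sum_char_vec_offdiag_ge[OF W \<open>C \<subseteq> {1..n}\<close> \<open>K \<subseteq> C\<close>]
      card_offdiag[OF \<open>finite C\<close>] card_offdiag[OF finite_subset[OF \<open>K \<subseteq> C\<close> \<open>finite C\<close>]]
    by (simp add: m_def k_def)
  have correction: "k - x12 - k * (k - 1) / 2 \<le> 0"
  proof (cases "K = {}")
    case True
    then show ?thesis
      using char_vec_nonneg by (simp add: k_def x12_def)
  next
    case False
    then obtain j where "(i1, j) \<in> W" "(j, i2) \<in> W"
      by (auto simp: K_def)
    then have "x12 = 1"
      using \<open>trans W\<close> i by (auto simp: x12_def char_vec_arc dest: transD)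
    moreover have "k - 1 - k * (k - 1) / 2 = - ((k - 1) * (k - 2)) / 2"
      by (simp add: field_simps)
    ultimately show ?thesis
      using of_nat_minus_one_mult_minus_two_nonneg[of "card K"] by (simp add: k_def)
  qed
  have "ineq_lhs n i1 i2 (char_vec n W) \<le> 2 * m + k - x12 - (m * (m - 1) + k * (k - 1)) / 2"
    unfolding ineq_lhs_def C_def[symmetric] x12_def[symmetric]
    using star pairs by (simp add: field_simps)
  also have "\<dots> = 3 - (m - 2) * (m - 3) / 2 + (k - x12 - k * (k - 1) / 2)"
    by (simp add: field_simps)
  also have "\<dots> \<le> 3 - (m - 2) * (m - 3) / 2"
    using correction by simp
  finally show ?thesis
    by (simp add: m algebra_simps)
qed

lemma weak_order_polytope_valid_ineq:
  fixes L :: "(nat \<times> nat \<Rightarrow> real) \<Rightarrow> real"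
  assumes linear: "\<And>S c (v :: (nat \<times> nat) set \<Rightarrow> nat \<times> nat \<Rightarrow> real).
      L (\<lambda>a. \<Sum>W\<in>S. c W * v W a) = (\<Sum>W\<in>S. c W * L (v W))"
    and vertex: "\<And>W. weak_order_on n W \<Longrightarrow> L (char_vec n W) \<le> r"
    and "x \<in> weak_order_polytope n"
  shows "L x \<le> r"
proof -
  obtain S c where S: "\<forall>W\<in>S. weak_order_on n W" "\<forall>W\<in>S. c W \<ge> 0" "sum c S = 1"
    and x: "x = (\<lambda>a. \<Sum>W\<in>S. c W * char_vec n W a)"
    using \<open>x \<in> weak_order_polytope n\<close> unfolding weak_order_polytope_def by blast
  have "L x = (\<Sum>W\<in>S. c W * L (char_vec n W))"
    unfolding x by (rule linear)
  also have "\<dots> \<le> (\<Sum>W\<in>S. c W * r)"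
    using S vertex by (intro sum_mono mult_left_mono) auto
  also have "\<dots> = r"
    using S(3) by (simp add: sum_distrib_right[symmetric])
  finally show ?thesis .
qed

theorem mainTheorem6:
  fixes n i1 i2 :: nat and x :: "nat \<times> nat \<Rightarrow> real"
  assumes "n \<ge> 4"
    and "i1 \<in> {1..n}" and "i2 \<in> {1..n}" and "i1 \<noteq> i2"
    and "x \<in> weak_order_polytope n"
  shows "(\<Sum>j\<in>{1..n} - {i1, i2}. x (i1, j) + x (j, i1) + x (j, i2)) - x (i1, i2)
           - (\<Sum>(j, j')\<in>{(j, j'). j \<in> {1..n} - {i1, i2} \<and> j' \<in> {1..n} - {i1, i2} \<and> j \<noteq> j'}. x (j, j'))
         \<le> 3 - (real n - 4) * (real n - 5) / 2"
proof -
  have "ineq_lhs n i1 i2 x \<le> 3 - (real n - 4) * (real n - 5) / 2"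
    using ineq_lhs_weighted_sum ineq_lhs_char_vec_le[OF _ assms(1-4)] assms(5)
    by (rule weak_order_polytope_valid_ineq)
  moreover have "{(j, j'). j \<in> {1..n} - {i1, i2} \<and> j' \<in> {1..n} - {i1, i2} \<and> j \<noteq> j'}
      = offdiag ({1..n} - {i1, i2})"
    by (auto simp: offdiag_def)
  ultimately show ?thesis
    by (simp add: ineq_lhs_def)
qed

end
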